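(* Let $\mathcal{A}$ and $\mathcal{B}$ be subspaces of $\mathbb{C}^n$ with $\dim\mathcal{A}=a$ and $\dim\mathcal{B}=b$. Let $\{\mathbf{a}_1,\dots,\mathbf{a}_a\}$ be an orthonormal basis of $\mathcal{A}$ and $\{\mathbf{b}_1,\dots,\mathbf{b}_b\}$ an arbitrary (not necessarily orthonormal) basis of $\mathcal{B}$. Then $$\sin\{\mathcal{A},\mathcal{B}\}\le\prod_{j=1}^{\min\{a,b\}}\sin\{\mathbf{a}_j,\mathbf{b}_j\}.$$
   Context: Principal angles: for subspaces $\mathcal{A},\mathcal{B}\subseteq\mathbb{C}^n$ with $a=\dim\mathcal{A}\le\dim\mathcal{B}$, define recursively $\cos\theta_k=\max|\langle\mathbf{u},\mathbf{w}\rangle|$ over unit vectors $\mathbf{u}\in\mathcal{A}$, $\mathbf{w}\in\mathcal{B}$ orthogonal to the previously chosen maximizers $\mathbf{u}_1,\dots,\mathbf{u}_{k-1}$, resp. $\mathbf{w}_1,\dots,\mathbf{w}_{k-1}$, giving $0\le\theta_1\le\dots\le\theta_a\le\pi/2$; set $\sin\{\mathcal{A},\mathcal{B}\}=\prod_{k=1}^a\sin\theta_k$ (with the lower-dimensional subspace in the role of $\mathcal{A}$). For vectors or matrices, $\sin\{\cdot,\cdot\}$ refers to the subspaces spanned by their columns; in particular $\sin\{\mathbf{a}_j,\mathbf{b}_j\}$ is the sine of the angle between the lines spanned by $\mathbf{a}_j$ and $\mathbf{b}_j$. *)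

theory Defs
  imports "HOL-Analysis.Analysis"
begin

text \<open>Standard Hermitian inner product on complex n-space (linear in the first argument).\<close>
definition cinner :: "complex ^ 'n \<Rightarrow> complex ^ 'n \<Rightarrow> complex" where
  "cinner x y = (\<Sum>i\<in>UNIV. x $ i * cnj (y $ i))"

abbreviation csubspace :: "(complex ^ 'n) set \<Rightarrow> bool" where
  "csubspace S \<equiv> vec.subspace S"

abbreviation cdim :: "(complex ^ 'n) set \<Rightarrow> nat" where
  "cdim S \<equiv> vec.dim S"

definition principal_vectors ::
  "(complex ^ 'n) set \<Rightarrow> (complex ^ 'n) set \<Rightarrow> nat \<Rightarrow> (nat \<Rightarrow> complex ^ 'n) \<Rightarrow> (nat \<Rightarrow> complex ^ 'n) \<Rightarrow> bool" where
  "principal_vectors A B d u w \<longleftrightarrow>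
     (\<forall>k<d. u k \<in> A \<and> w k \<in> B \<and> cinner (u k) (u k) = 1 \<and> cinner (w k) (w k) = 1 \<and>
        (\<forall>j<k. cinner (u k) (u j) = 0 \<and> cinner (w k) (w j) = 0) \<and>
        (\<forall>x y. x \<in> A \<and> y \<in> B \<and> cinner x x = 1 \<and> cinner y y = 1 \<and>
               (\<forall>j<k. cinner x (u j) = 0 \<and> cinner y (w j) = 0)
               \<longrightarrow> cmod (cinner x y) \<le> cmod (cinner (u k) (w k))))"

text \<open>Product of sines of the principal angles, A in the role of the lower-dimensional space:
  cos theta_k = |<u_k, w_k>|, theta_k in [0, pi/2].\<close>
definition sin_prod_aux :: "(complex ^ 'n) set \<Rightarrow> (complex ^ 'n) set \<Rightarrow> real" where
  "sin_prod_aux A B =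
     (let d = cdim A;
          uw = (SOME uw. principal_vectors A B d (fst uw) (snd uw))
      in \<Prod>k<d. sin (arccos (cmod (cinner (fst uw k) (snd uw k)))))"

definition sin_subspaces :: "(complex ^ 'n) set \<Rightarrow> (complex ^ 'n) set \<Rightarrow> real" where
  "sin_subspaces A B = (if cdim A \<le> cdim B then sin_prod_aux A B else sin_prod_aux B A)"

definition sin_vec :: "complex ^ 'n \<Rightarrow> complex ^ 'n \<Rightarrow> real" where
  "sin_vec x y = sin_subspaces (vec.span {x}) (vec.span {y})"

end

theory Submission
  imports Defs
begin

(* Take d = min a b principal pairs p k \<in> A, q k \<in> B (computed in the order required by
   sin_subspaces and swapped if necessary) with cosines c k = cinner (p k) (q k); the k-th
   sine is sqrt (1 - |c k|^2).  Maximality of each pair forces the residuals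
   r k = p k - c k q k to be pairwise orthogonal, orthogonal to B and of squared length
   1 - |c k|^2, while the part of A orthogonal to all p k is orthogonal to B.  Hence the
   component of a j orthogonal to B has squared length
     sum_k |<a j, p k>|^2 (1 - |c k|^2) + (1 - sum_k |<a j, p k>|^2).
   By Bessel's inequality the matrix (|<a j, p k>|^2) is doubly substochastic, and concavity
   of the logarithm yields prod_k (1 - |c k|^2) <= prod_j dist (a j, B)^2.  Finally
   dist (a j, B) <= sin{a j, b j} because b j lies in B. *)

section \<open>The Hermitian inner product\<close>

lemma cinner_add_left: "cinner (x + y) z = cinner x z + cinner y z"
  by (simp add: cinner_def distrib_right sum.distrib)

lemma cinner_add_right: "cinner x (y + z) = cinner x y + cinner x z"
  by (simp add: cinner_def distrib_left sum.distrib)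

lemma cinner_diff_left: "cinner (x - y) z = cinner x z - cinner y z"
  by (simp add: cinner_def left_diff_distrib sum_subtractf)

lemma cinner_diff_right: "cinner x (y - z) = cinner x y - cinner x z"
  by (simp add: cinner_def right_diff_distrib sum_subtractf)

lemma cinner_scale_left: "cinner (c *s x) y = c * cinner x y"
  by (simp add: cinner_def sum_distrib_left mult.assoc)

lemma cinner_scale_right: "cinner x (c *s y) = cnj c * cinner x y"
  by (simp add: cinner_def sum_distrib_left mult_ac)

lemma cinner_zero_left [simp]: "cinner 0 y = 0"
  by (simp add: cinner_def)

lemma cinner_zero_right [simp]: "cinner x 0 = 0"
  by (simp add: cinner_def)

lemma cinner_sum_left: "cinner (\<Sum>i\<in>I. f i) z = (\<Sum>i\<in>I. cinner (f i) z)"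
  by (induction I rule: infinite_finite_induct) (auto simp: cinner_add_left)

lemma cinner_sum_right: "cinner z (\<Sum>i\<in>I. f i) = (\<Sum>i\<in>I. cinner z (f i))"
  by (induction I rule: infinite_finite_induct) (auto simp: cinner_add_right)

lemma cinner_commute: "cinner y x = cnj (cinner x y)"
  by (simp add: cinner_def mult.commute)

lemma cinner_eq_0_commute: "cinner x y = 0 \<Longrightarrow> cinner y x = 0"
  by (metis cinner_commute complex_cnj_zero)

lemma cmod_cinner_commute: "cmod (cinner x y) = cmod (cinner y x)"
  by (subst cinner_commute) (rule complex_mod_cnj)

lemma cinner_self: "cinner x x = complex_of_real ((norm x)\<^sup>2)"
proof -
  have "cinner x x = (\<Sum>i\<in>UNIV. complex_of_real ((cmod (x $ i))\<^sup>2))"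
    unfolding cinner_def
    by (rule sum.cong) (auto simp: complex_norm_square[symmetric] simp del: of_real_power)
  also have "\<dots> = complex_of_real ((norm x)\<^sup>2)"
    by (simp add: norm_vec_def L2_set_def sum_nonneg del: of_real_power)
  finally show ?thesis .
qed

lemma of_real_cmod_power2: "(complex_of_real (cmod z))\<^sup>2 = z * cnj z"
  by (metis complex_norm_square of_real_power)

lemma of_real_cmod_mult_self: "complex_of_real (cmod z) * complex_of_real (cmod z) = z * cnj z"
  by (metis of_real_cmod_power2 power2_eq_square)

lemma cinner_self_eq_1_iff: "cinner x x = 1 \<longleftrightarrow> norm x = 1"
  unfolding cinner_self of_real_eq_1_iff using power2_eq_iff_nonneg[of "norm x" 1] by simp

lemma cinner_self_eq_0_iff: "cinner x x = 0 \<longleftrightarrow> x = 0"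
  by (simp add: cinner_self)

lemma cinner_Cauchy_Schwarz: "cmod (cinner x y) \<le> norm x * norm y"
proof -
  have "cmod (cinner x y) \<le> (\<Sum>i\<in>UNIV. \<bar>cmod (x $ i)\<bar> * \<bar>cmod (y $ i)\<bar>)"
    unfolding cinner_def by (rule order_trans[OF norm_sum]) (simp add: norm_mult)
  also have "\<dots> \<le> norm x * norm y"
    unfolding norm_vec_def by (rule L2_set_mult_ineq)
  finally show ?thesis .
qed

lemma norm_vector_smult: "norm (c *s x) = cmod c * norm (x :: complex ^ 'n)"
  unfolding norm_vec_def by (simp add: norm_mult L2_set_right_distrib)

lemma cinner_self_normalize:
  assumes "v \<noteq> 0"
  shows "cinner (complex_of_real (1 / norm v) *s v) (complex_of_real (1 / norm v) *s v) = 1"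
  using assms by (simp add: cinner_self_eq_1_iff norm_vector_smult norm_divide)

lemma orthogonal_if_cinner_eq_0: "cinner x y = 0 \<Longrightarrow> orthogonal x y"
proof -
  assume "cinner x y = 0"
  moreover have "Re (cinner x y) = inner x y"
    by (simp add: cinner_def inner_vec_def inner_complex_def)
  ultimately show "orthogonal x y"
    by (simp add: orthogonal_def)
qed

lemma norm_add_smult_orthogonal:
  assumes "cinner z q = 0"
  shows "(norm (q + e *s z))\<^sup>2 = (norm q)\<^sup>2 + (cmod e * norm z)\<^sup>2"
proof -
  have "cinner (e *s z) q = 0"
    using assms by (simp add: cinner_scale_left)
  then have "orthogonal q (e *s z)"
    by (rule orthogonal_if_cinner_eq_0[OF cinner_eq_0_commute])
  then have "(norm (q + e *s z))\<^sup>2 = (norm q)\<^sup>2 + (norm (e *s z))\<^sup>2"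
    by (rule norm_add_Pythagorean)
  then show ?thesis
    by (simp only: norm_vector_smult)
qed

lemma cinner_span_eq_0:
  assumes "y \<in> vec.span S" "\<And>s. s \<in> S \<Longrightarrow> cinner x s = 0"
  shows "cinner x y = 0"
  using assms(1)
proof (induction rule: vec.span_induct)
  case base
  show ?case
    unfolding vec.subspace_def by (auto simp: cinner_add_right cinner_scale_right)
next
  case (step s)
  then show ?case using assms(2) by simp
qed

lemma scaleR_vec_eq: "r *\<^sub>R x = complex_of_real r *s (x :: complex ^ 'n)"
  by (vector scaleR_conv_of_real)

lemma closed_csubspace: "csubspace S \<Longrightarrow> closed S"
proof -
  assume "csubspace S"
  then have "subspace S"
    unfolding subspace_def vec.subspace_def by (simp add: scaleR_vec_eq)
  then show "closed S" by (rule closed_subspace)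
qed

section \<open>Orthonormal families\<close>

definition orthonormal :: "nat \<Rightarrow> (nat \<Rightarrow> complex ^ 'n) \<Rightarrow> bool" where
  "orthonormal d u \<longleftrightarrow> (\<forall>i<d. \<forall>j<d. cinner (u i) (u j) = (if i = j then 1 else 0))"

lemma orthonormalI:
  assumes "\<forall>k<d. cinner (u k) (u k) = 1 \<and> (\<forall>j<k. cinner (u k) (u j) = 0)"
  shows "orthonormal d u"
  unfolding orthonormal_def
proof (intro allI impI)
  fix i j assume "i < d" "j < d"
  consider "i < j" | "i = j" | "j < i" by linarith
  then show "cinner (u i) (u j) = (if i = j then 1 else 0)"
  proof cases
    case 1
    then have "cinner (u j) (u i) = 0" using assms \<open>j < d\<close> by blast
    then have "cinner (u i) (u j) = 0" by (rule cinner_eq_0_commute)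
    then show ?thesis using 1 by simp
  next
    case 2
    then show ?thesis using assms \<open>j < d\<close> by simp
  next
    case 3
    then show ?thesis using assms \<open>i < d\<close> by simp
  qed
qed

lemma orthonormal_mono: "orthonormal d u \<Longrightarrow> k \<le> d \<Longrightarrow> orthonormal k u"
  by (simp add: orthonormal_def)

lemma orthonormal_norm: "orthonormal d u \<Longrightarrow> j < d \<Longrightarrow> norm (u j) = 1"
  by (simp add: orthonormal_def flip: cinner_self_eq_1_iff)

lemma orthonormal_inj_on:
  assumes "orthonormal d u"
  shows "inj_on u {..<d}"
proof (rule inj_onI)
  fix i j assume ij: "i \<in> {..<d}" "j \<in> {..<d}" and "u i = u j"
  have "cinner (u i) (u j) = (if i = j then 1 else 0)"
    using assms ij by (simp add: orthonormal_def)
  moreover have "cinner (u i) (u j) = 1"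
    using assms ij \<open>u i = u j\<close> by (simp add: orthonormal_def)
  ultimately show "i = j"
    by (simp split: if_splits)
qed

lemma cinner_orthonormal_expansion:
  assumes "orthonormal d u" "i < d"
  shows "cinner (\<Sum>j<d. c j *s u j) (u i) = c i"
proof -
  have "cinner (\<Sum>j<d. c j *s u j) (u i) = (\<Sum>j<d. c j * cinner (u j) (u i))"
    by (simp add: cinner_sum_left cinner_scale_left)
  also have "\<dots> = (\<Sum>j\<in>{i}. c j * cinner (u j) (u i))"
    by (rule sum.mono_neutral_right) (use assms in \<open>auto simp: orthonormal_def\<close>)
  also have "\<dots> = c i"
    using assms by (simp add: orthonormal_def)
  finally show ?thesis .
qed

lemma cinner_sub_orthonormal_expansion:
  assumes "orthonormal d u" "i < d"
  shows "cinner (x - (\<Sum>j<d. cinner x (u j) *s u j)) (u i) = 0"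
  using cinner_orthonormal_expansion[OF assms] by (simp add: cinner_diff_left)

lemma orthonormal_independent:
  assumes "orthonormal d u"
  shows "vec.independent (u ` {..<d})"
  unfolding vec.independent_explicit
proof (intro conjI allI impI ballI)
  fix c v
  assume sum: "(\<Sum>v\<in>u ` {..<d}. c v *s v) = 0" and "v \<in> u ` {..<d}"
  then obtain i where i: "i < d" "v = u i" by auto
  have "(\<Sum>v\<in>u ` {..<d}. c v *s v) = (\<Sum>j<d. c (u j) *s u j)"
    using orthonormal_inj_on[OF assms] by (simp add: sum.reindex)
  then have "cinner (\<Sum>j<d. c (u j) *s u j) (u i) = 0"
    using sum by simp
  then show "c v = 0"
    using cinner_orthonormal_expansion[OF assms i(1)] i(2) by simp
qed simp

lemma orthonormal_span_superset:
  assumes "orthonormal d u" "\<forall>i<d. u i \<in> X" "cdim X \<le> d"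
  shows "X \<subseteq> vec.span (u ` {..<d})"
proof (rule vec.card_ge_dim_independent)
  show "u ` {..<d} \<subseteq> X" "vec.independent (u ` {..<d})"
    using assms(2) orthonormal_independent[OF assms(1)] by auto
  show "cdim X \<le> card (u ` {..<d})"
    using assms(3) orthonormal_inj_on[OF assms(1)] by (simp add: card_image)
qed

lemma exists_unit_orthogonal:
  assumes X: "csubspace X" and u: "orthonormal d u" "\<forall>i<d. u i \<in> X" and "d < cdim X"
  shows "\<exists>x\<in>X. cinner x x = 1 \<and> (\<forall>j<d. cinner x (u j) = 0)"
proof -
  have "\<not> X \<subseteq> vec.span (u ` {..<d})"
  proof
    assume "X \<subseteq> vec.span (u ` {..<d})"
    then have "cdim X \<le> card (u ` {..<d})" by (simp add: vec.dim_le_card)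
    also have "\<dots> \<le> d" using card_image_le[of "{..<d}" u] by simp
    finally show False using \<open>d < cdim X\<close> by simp
  qed
  then obtain v where v: "v \<in> X" "v \<notin> vec.span (u ` {..<d})" by auto
  define e where "e = v - (\<Sum>j<d. cinner v (u j) *s u j)"
  have "e \<in> X"
    unfolding e_def using u(2) v(1)
    by (intro vec.subspace_diff[OF X] vec.subspace_sum[OF X] vec.subspace_scale[OF X]) auto
  have "e \<noteq> 0"
  proof
    assume "e = 0"
    then have "v = (\<Sum>j<d. cinner v (u j) *s u j)" by (simp add: e_def)
    also have "\<dots> \<in> vec.span (u ` {..<d})"
      by (intro vec.span_sum vec.span_scale vec.span_base) auto
    finally show False using v(2) by simp
  qed
  define x where "x = complex_of_real (1 / norm e) *s e"
  have "x \<in> X" unfolding x_def by (rule vec.subspace_scale[OF X \<open>e \<in> X\<close>])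
  moreover have "cinner x x = 1"
    unfolding x_def by (rule cinner_self_normalize[OF \<open>e \<noteq> 0\<close>])
  moreover have "\<forall>j<d. cinner x (u j) = 0"
    using cinner_sub_orthonormal_expansion[OF u(1), of _ v]
    by (simp add: x_def cinner_scale_left flip: e_def)
  ultimately show ?thesis by blast
qed

lemma continuous_on_cinner [continuous_intros]:
  "continuous_on S f \<Longrightarrow> continuous_on S g \<Longrightarrow> continuous_on S (\<lambda>x. cinner (f x) (g x))"
  unfolding cinner_def by (intro continuous_intros)

lemma compact_unit_orthogonal:
  assumes "csubspace X"
  shows "compact {x\<in>X. cinner x x = 1 \<and> (\<forall>j<d. cinner x (u j) = 0)}"
proof -
  have "{x\<in>X. cinner x x = 1 \<and> (\<forall>j<d. cinner x (u j) = 0)} =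
        X \<inter> {x. cinner x x = 1} \<inter> (\<Inter>j<d. {x. cinner x (u j) = 0})"
    by blast
  moreover have "closed (X \<inter> {x. cinner x x = 1} \<inter> (\<Inter>j<d. {x. cinner x (u j) = 0}))"
    using closed_csubspace[OF assms]
    by (intro closed_Int closed_INT ballI closed_Collect_eq continuous_intros) auto
  moreover have "{x\<in>X. cinner x x = 1 \<and> (\<forall>j<d. cinner x (u j) = 0)} \<subseteq> cball 0 1"
    by (auto simp: cinner_self_eq_1_iff)
  ultimately show ?thesis
    by (simp add: compact_eq_bounded_closed bounded_subset[OF bounded_cball])
qed

lemma cinner_orthogonal_sum:
  fixes v :: "nat \<Rightarrow> complex ^ 'n"
  assumes "\<forall>k<d. \<forall>l<d. k \<noteq> l \<longrightarrow> cinner (v k) (v l) = 0"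
  shows "cinner (\<Sum>k<d. \<beta> k *s v k) (\<Sum>l<d. \<gamma> l *s v l) =
           (\<Sum>k<d. \<beta> k * cnj (\<gamma> k) * cinner (v k) (v k))"
proof -
  have "cinner (\<Sum>k<d. \<beta> k *s v k) (\<Sum>l<d. \<gamma> l *s v l) =
        (\<Sum>k<d. \<beta> k * cinner (v k) (\<Sum>l<d. \<gamma> l *s v l))"
    by (simp add: cinner_sum_left cinner_scale_left)
  also have "\<dots> = (\<Sum>k<d. \<beta> k * (\<Sum>l<d. cnj (\<gamma> l) * cinner (v k) (v l)))"
    by (simp add: cinner_sum_right cinner_scale_right)
  also have "\<dots> = (\<Sum>k<d. \<beta> k * (\<Sum>l\<in>{k}. cnj (\<gamma> l) * cinner (v k) (v l)))"
  proof (rule sum.cong[OF refl])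
    fix k assume k: "k \<in> {..<d}"
    have "(\<Sum>l<d. cnj (\<gamma> l) * cinner (v k) (v l)) = (\<Sum>l\<in>{k}. cnj (\<gamma> l) * cinner (v k) (v l))"
      using assms k by (intro sum.mono_neutral_right) auto
    then show "\<beta> k * (\<Sum>l<d. cnj (\<gamma> l) * cinner (v k) (v l)) =
               \<beta> k * (\<Sum>l\<in>{k}. cnj (\<gamma> l) * cinner (v k) (v l))"
      by simp
  qed
  finally show ?thesis by (simp add: mult.assoc)
qed

lemma norm_orthonormal_remainder:
  assumes "orthonormal d u"
  shows "(norm (x - (\<Sum>j<d. cinner x (u j) *s u j)))\<^sup>2 =
         (norm x)\<^sup>2 - (\<Sum>j<d. (cmod (cinner x (u j)))\<^sup>2)"
proof -
  define \<beta> where "\<beta> j = cinner x (u j)" for j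
  have S: "(\<Sum>j<d. \<beta> j * cnj (\<beta> j)) = complex_of_real (\<Sum>j<d. (cmod (\<beta> j))\<^sup>2)"
    by (simp add: of_real_cmod_power2)
  have "cinner x (\<Sum>j<d. \<beta> j *s u j) = (\<Sum>j<d. \<beta> j * cnj (\<beta> j))"
    by (simp add: cinner_sum_right cinner_scale_right \<beta>_def mult.commute)
  moreover have "cinner (\<Sum>j<d. \<beta> j *s u j) x = (\<Sum>j<d. \<beta> j * cnj (\<beta> j))"
    by (simp add: cinner_sum_left cinner_scale_left \<beta>_def cinner_commute[of "u _" x])
  moreover have "cinner (\<Sum>j<d. \<beta> j *s u j) (\<Sum>j<d. \<beta> j *s u j) = (\<Sum>j<d. \<beta> j * cnj (\<beta> j))"
    using assms by (subst cinner_orthogonal_sum) (auto simp: orthonormal_def intro: sum.cong)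
  ultimately have "cinner (x - (\<Sum>j<d. \<beta> j *s u j)) (x - (\<Sum>j<d. \<beta> j *s u j)) =
                   cinner x x - complex_of_real (\<Sum>j<d. (cmod (\<beta> j))\<^sup>2)"
    unfolding S[symmetric] by (simp add: cinner_diff_left cinner_diff_right)
  then show ?thesis
    unfolding \<beta>_def by (simp only: cinner_self flip: of_real_diff) (simp only: of_real_eq_iff)
qed

lemma Bessel_inequality:
  assumes "orthonormal d u"
  shows "(\<Sum>j<d. (cmod (cinner x (u j)))\<^sup>2) \<le> (norm x)\<^sup>2"
  using norm_orthonormal_remainder[OF assms, of x]
    zero_le_power2[of "norm (x - (\<Sum>j<d. cinner x (u j) *s u j))"]
  by linarith

lemma orthonormal_cross_substochastic:
  assumes a: "orthonormal m a" and p: "orthonormal d p"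
  shows "\<forall>j<m. (\<Sum>k<d. (cmod (cinner (a j) (p k)))\<^sup>2) \<le> 1"
    and "\<forall>k<d. (\<Sum>j<m. (cmod (cinner (a j) (p k)))\<^sup>2) \<le> 1"
proof (intro allI impI)
  fix j assume "j < m"
  then show "(\<Sum>k<d. (cmod (cinner (a j) (p k)))\<^sup>2) \<le> 1"
    using Bessel_inequality[OF p, of "a j"] orthonormal_norm[OF a] by simp
next
  show "\<forall>k<d. (\<Sum>j<m. (cmod (cinner (a j) (p k)))\<^sup>2) \<le> 1"
  proof (intro allI impI)
    fix k assume "k < d"
    then show "(\<Sum>j<m. (cmod (cinner (a j) (p k)))\<^sup>2) \<le> 1"
      using Bessel_inequality[OF a, of "p k"] orthonormal_norm[OF p] by (simp add: cmod_cinner_commute)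
  qed
qed

section \<open>Principal vectors\<close>

lemma principal_vectorsD:
  assumes "principal_vectors P Q d p q" "k < d"
  shows "p k \<in> P" "q k \<in> Q" "cinner (p k) (p k) = 1" "cinner (q k) (q k) = 1"
    "\<forall>j<k. cinner (p k) (p j) = 0" "\<forall>j<k. cinner (q k) (q j) = 0"
    "\<And>x y. x \<in> P \<Longrightarrow> y \<in> Q \<Longrightarrow> cinner x x = 1 \<Longrightarrow> cinner y y = 1 \<Longrightarrow>
       \<forall>j<k. cinner x (p j) = 0 \<Longrightarrow> \<forall>j<k. cinner y (q j) = 0 \<Longrightarrow>
       cmod (cinner x y) \<le> cmod (cinner (p k) (q k))"
  using assms unfolding principal_vectors_def by blast+

lemma principal_vectors_orthonormal:
  assumes "principal_vectors P Q d p q"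
  shows "orthonormal d p" "orthonormal d q"
  using principal_vectorsD(3-6)[OF assms] by (intro orthonormalI; blast)+

lemma principal_vectors_cos_le_1:
  assumes "principal_vectors P Q d p q" "k < d"
  shows "cmod (cinner (p k) (q k)) \<le> 1"
  using cinner_Cauchy_Schwarz[of "p k" "q k"] principal_vectorsD(3,4)[OF assms]
  by (simp add: cinner_self_eq_1_iff)

lemma principal_vectors_swap:
  assumes "principal_vectors P Q d p q"
  shows "principal_vectors Q P d q p"
proof -
  have "cmod (cinner x y) \<le> cmod (cinner (q k) (p k))"
    if "k < d" "x \<in> Q" "y \<in> P" "cinner x x = 1" "cinner y y = 1"
       "\<forall>j<k. cinner x (q j) = 0" "\<forall>j<k. cinner y (p j) = 0" for k x y
    using principal_vectorsD(7)[OF assms that(1,3,2,5,4,7,6)] by (simp add: cmod_cinner_commute)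
  then show ?thesis
    unfolding principal_vectors_def
    by (intro allI impI conjI; (elim conjE)?; simp add: principal_vectorsD(1-6)[OF assms])
qed

lemma principal_vectors_extend:
  assumes pv: "principal_vectors P Q d p q"
    and xy: "x \<in> P" "y \<in> Q" "cinner x x = 1" "cinner y y = 1"
      "\<forall>j<d. cinner x (p j) = 0" "\<forall>j<d. cinner y (q j) = 0"
    and max: "\<And>x' y'. x' \<in> P \<Longrightarrow> y' \<in> Q \<Longrightarrow> cinner x' x' = 1 \<Longrightarrow> cinner y' y' = 1 \<Longrightarrow>
       \<forall>j<d. cinner x' (p j) = 0 \<Longrightarrow> \<forall>j<d. cinner y' (q j) = 0 \<Longrightarrow>
       cmod (cinner x' y') \<le> cmod (cinner x y)"
  shows "principal_vectors P Q (Suc d) (p(d := x)) (q(d := y))"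
  unfolding principal_vectors_def
proof (intro allI impI)
  fix k assume "k < Suc d"
  then consider "k < d" | "k = d" by linarith
  then show "(p(d := x)) k \<in> P \<and> (q(d := y)) k \<in> Q \<and>
    cinner ((p(d := x)) k) ((p(d := x)) k) = 1 \<and> cinner ((q(d := y)) k) ((q(d := y)) k) = 1 \<and>
    (\<forall>j<k. cinner ((p(d := x)) k) ((p(d := x)) j) = 0 \<and> cinner ((q(d := y)) k) ((q(d := y)) j) = 0) \<and>
    (\<forall>x' y'. x' \<in> P \<and> y' \<in> Q \<and> cinner x' x' = 1 \<and> cinner y' y' = 1 \<and>
       (\<forall>j<k. cinner x' ((p(d := x)) j) = 0 \<and> cinner y' ((q(d := y)) j) = 0) \<longrightarrow>
       cmod (cinner x' y') \<le> cmod (cinner ((p(d := x)) k) ((q(d := y)) k)))"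
  proof cases
    case 1
    then show ?thesis
      using pv unfolding principal_vectors_def by auto
  next
    case 2
    then show ?thesis
      using xy max by auto
  qed
qed

lemma principal_vectors_exist:
  assumes P: "csubspace P" and Q: "csubspace Q" and "d \<le> cdim P" "d \<le> cdim Q"
  shows "\<exists>p q. principal_vectors P Q d p q"
  using assms(3,4)
proof (induction d)
  case 0
  show ?case by (simp add: principal_vectors_def)
next
  case (Suc d)
  then obtain p q where pv: "principal_vectors P Q d p q" by auto
  define S where "S = {x\<in>P. cinner x x = 1 \<and> (\<forall>j<d. cinner x (p j) = 0)}"
  define T where "T = {y\<in>Q. cinner y y = 1 \<and> (\<forall>j<d. cinner y (q j) = 0)}"
  have "\<forall>i<d. p i \<in> P" "\<forall>i<d. q i \<in> Q"
    using principal_vectorsD(1,2)[OF pv] by auto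
  then have "S \<noteq> {}" "T \<noteq> {}"
    unfolding S_def T_def using Suc.prems
      exists_unit_orthogonal[OF P principal_vectors_orthonormal(1)[OF pv]]
      exists_unit_orthogonal[OF Q principal_vectors_orthonormal(2)[OF pv]]
    by fastforce+
  moreover have "compact (S \<times> T)"
    unfolding S_def T_def by (intro compact_Times compact_unit_orthogonal P Q)
  moreover have "continuous_on (S \<times> T) (\<lambda>z. cmod (cinner (fst z) (snd z)))"
    by (intro continuous_intros)
  ultimately obtain z where z: "z \<in> S \<times> T"
    and max: "\<forall>z'\<in>S \<times> T. cmod (cinner (fst z') (snd z')) \<le> cmod (cinner (fst z) (snd z))"
    using continuous_attains_sup[of "S \<times> T"] by blast
  have "principal_vectors P Q (Suc d) (p(d := fst z)) (q(d := snd z))"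
    using z max by (intro principal_vectors_extend[OF pv]) (auto simp: S_def T_def)
  then show ?case by blast
qed

lemma principal_vectors_max:
  assumes pv: "principal_vectors P Q d p q" and Q: "csubspace Q" and k: "k < d"
    and x: "x \<in> P" "cinner x x = 1" "\<forall>j<k. cinner x (p j) = 0"
    and v: "v \<in> Q" "\<forall>j<k. cinner v (q j) = 0"
  shows "cmod (cinner x v) \<le> cmod (cinner (p k) (q k)) * norm v"
proof (cases "v = 0")
  case True
  then show ?thesis by simp
next
  case False
  define y where "y = complex_of_real (1 / norm v) *s v"
  have "cmod (cinner x y) \<le> cmod (cinner (p k) (q k))"
  proof (rule principal_vectorsD(7)[OF pv k x(1) _ x(2) _ x(3)])
    show "y \<in> Q" unfolding y_def by (rule vec.subspace_scale[OF Q v(1)])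
    show "cinner y y = 1" unfolding y_def by (rule cinner_self_normalize[OF False])
    show "\<forall>j<k. cinner y (q j) = 0" using v(2) by (simp add: y_def cinner_scale_left)
  qed
  then show ?thesis
    using False by (simp add: y_def cinner_scale_right norm_divide divide_le_eq)
qed

lemma exists_small_step_gain:
  fixes T C K :: real
  assumes "T > 0" "C \<ge> 0" "K \<ge> 0"
  shows "\<exists>\<eta>>0. 1 + \<eta>\<^sup>2 * C * T * K < (1 + \<eta> * T)\<^sup>2"
proof (intro exI conjI)
  define \<eta> where "\<eta> = 1 / (1 + C * K)"
  show "\<eta> > 0"
    using assms by (simp add: \<eta>_def add_pos_nonneg)
  have "\<eta> * (C * K) < 1"
    using assms by (simp add: \<eta>_def field_simps add_pos_nonneg)
  then have "\<eta> * (C * K) < 2 + \<eta> * T"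
    using \<open>\<eta> > 0\<close> assms(1) by (smt (verit) mult_pos_pos)
  then have "\<eta> * T * (\<eta> * (C * K)) < \<eta> * T * (2 + \<eta> * T)"
    using \<open>\<eta> > 0\<close> assms(1) by (simp add: mult_strict_left_mono)
  then show "1 + \<eta>\<^sup>2 * C * T * K < (1 + \<eta> * T)\<^sup>2"
    by (simp add: power2_eq_square algebra_simps)
qed

text \<open>First-order optimality of the k-th principal pair: moving q k towards a direction z
  of Q that is orthogonal to q 0, ..., q k would increase the cosine to first order while
  changing the norm only to second order.\<close>
lemma principal_vectors_stationary:
  assumes pv: "principal_vectors P Q d p q" and Q: "csubspace Q" and k: "k < d"
    and z: "z \<in> Q" "\<forall>j<k. cinner z (q j) = 0" "cinner z (q k) = 0"
  shows "cinner (p k) z = 0"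
proof (rule ccontr)
  define c where "c = cinner (p k) (q k)"
  define t where "t = cinner (p k) z"
  assume "cinner (p k) z \<noteq> 0"
  then have t: "(cmod t)\<^sup>2 > 0" by (simp add: t_def)
  note pk = principal_vectorsD[OF pv k]
  have max: "cmod (cinner (p k) v) \<le> cmod c * norm v"
    if "v \<in> Q" "\<forall>j<k. cinner v (q j) = 0" for v
    unfolding c_def by (rule principal_vectors_max[OF pv Q k pk(1,3,5) that])
  show False
  proof (cases "c = 0")
    case True
    then show False using max[OF z(1,2)] t by (simp add: t_def)
  next
    case False
    obtain \<eta> where \<eta>: "\<eta> > 0"
      and gain: "1 + \<eta>\<^sup>2 * (cmod c)\<^sup>2 * (cmod t)\<^sup>2 * (norm z)\<^sup>2 < (1 + \<eta> * (cmod t)\<^sup>2)\<^sup>2"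
      using exists_small_step_gain[OF t, of "(cmod c)\<^sup>2" "(norm z)\<^sup>2"] by auto
    define \<epsilon> where "\<epsilon> = complex_of_real \<eta> * cnj c * t"
    define v where "v = q k + \<epsilon> *s z"
    have "v \<in> Q"
      unfolding v_def using pk(2) z(1) by (intro vec.subspace_add[OF Q] vec.subspace_scale[OF Q])
    moreover have "\<forall>j<k. cinner v (q j) = 0"
      using pk(6) z(2) by (simp add: v_def cinner_add_left cinner_scale_left)
    ultimately have "cmod (cinner (p k) v) \<le> cmod c * norm v" by (rule max)
    moreover have "cinner (p k) v = c * complex_of_real (1 + \<eta> * (cmod t)\<^sup>2)"
    proof -
      have "cinner (p k) v = c + cnj \<epsilon> * t"
        by (simp add: v_def cinner_add_right cinner_scale_right c_def t_def)
      also have "cnj \<epsilon> * t = c * complex_of_real (\<eta> * (cmod t)\<^sup>2)"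
        by (simp add: \<epsilon>_def of_real_cmod_mult_self power2_eq_square mult_ac del: of_real_power)
      finally show ?thesis
        by (simp add: algebra_simps)
    qed
    moreover have nv: "(norm v)\<^sup>2 = 1 + \<eta>\<^sup>2 * (cmod c)\<^sup>2 * (cmod t)\<^sup>2 * (norm z)\<^sup>2"
    proof -
      have "(norm v)\<^sup>2 = 1 + (cmod \<epsilon> * norm z)\<^sup>2"
        using norm_add_smult_orthogonal[OF z(3)] pk(4) by (simp add: v_def cinner_self_eq_1_iff)
      also have "cmod \<epsilon> = \<eta> * cmod c * cmod t"
        using \<eta> by (simp add: \<epsilon>_def norm_mult)
      finally show ?thesis
        by (simp add: power_mult_distrib)
    qed
    moreover have "cmod (complex_of_real (1 + \<eta> * (cmod t)\<^sup>2)) = 1 + \<eta> * (cmod t)\<^sup>2"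
      using \<eta> by (simp only: norm_of_real) simp
    ultimately have "1 + \<eta> * (cmod t)\<^sup>2 \<le> norm v"
      using False by (simp add: norm_mult)
    then have "(1 + \<eta> * (cmod t)\<^sup>2)\<^sup>2 \<le> (norm v)\<^sup>2"
      using \<eta> by (intro power_mono) auto
    with gain nv show False
      by linarith
  qed
qed

lemma principal_vector_cinner_right:
  assumes pv: "principal_vectors P Q d p q" and Q: "csubspace Q" and k: "k < d"
    and y: "y \<in> Q" "\<forall>j<k. cinner y (q j) = 0"
  shows "cinner (p k) y = cinner (p k) (q k) * cinner (q k) y"
proof -
  note qk = principal_vectorsD(2,4,6)[OF pv k]
  define z where "z = y - cinner y (q k) *s q k"
  have "z \<in> Q"
    unfolding z_def using qk(1) y(1) by (intro vec.subspace_diff[OF Q] vec.subspace_scale[OF Q])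
  moreover have "\<forall>j<k. cinner z (q j) = 0" "cinner z (q k) = 0"
    using y(2) qk by (simp_all add: z_def cinner_diff_left cinner_scale_left)
  ultimately have "cinner (p k) z = 0"
    by (rule principal_vectors_stationary[OF pv Q k])
  then show ?thesis
    by (simp add: z_def cinner_diff_right cinner_scale_right cinner_commute[of y "q k"] mult.commute)
qed

lemma principal_vector_cinner_left:
  assumes pv: "principal_vectors P Q d p q" and P: "csubspace P" and k: "k < d"
    and x: "x \<in> P" "\<forall>j<k. cinner x (p j) = 0"
  shows "cinner x (q k) = cinner x (p k) * cinner (p k) (q k)"
proof -
  have "cinner (q k) x = cinner (q k) (p k) * cinner (p k) x"
    by (rule principal_vector_cinner_right[OF principal_vectors_swap[OF pv] P k x])
  then have "cnj (cinner (q k) x) = cnj (cinner (q k) (p k) * cinner (p k) x)"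
    by simp
  then show ?thesis
    by (simp add: cinner_commute[of "q k" x] cinner_commute[of "q k" "p k"]
        cinner_commute[of "p k" x] mult.commute)
qed

lemma principal_vectors_cinner_cross:
  assumes pv: "principal_vectors P Q d p q" and P: "csubspace P" and Q: "csubspace Q"
    and "i < d" "k < d" "i \<noteq> k"
  shows "cinner (p i) (q k) = 0"
proof (cases "k < i")
  case True
  then show ?thesis
    using principal_vector_cinner_left[OF pv P \<open>k < d\<close>, of "p i"] principal_vectorsD(1,5)[OF pv \<open>i < d\<close>]
    by auto
next
  case False
  then have "i < k" using \<open>i \<noteq> k\<close> by simp
  then have "cinner (q i) (q k) = 0"
    using principal_vectorsD(6)[OF pv \<open>k < d\<close>] cinner_eq_0_commute by blast
  then show ?thesis
    using principal_vector_cinner_right[OF pv Q \<open>i < d\<close>, of "q k"]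
      principal_vectorsD(2,6)[OF pv \<open>k < d\<close>] \<open>i < k\<close> by simp
qed

lemma principal_vectors_complement_orthogonal:
  assumes pv: "principal_vectors P Q d p q" and P: "csubspace P" and Q: "csubspace Q"
    and d: "cdim P \<le> d \<or> cdim Q \<le> d"
    and x: "x \<in> P" "\<forall>k<d. cinner x (p k) = 0" and y: "y \<in> Q"
  shows "cinner x y = 0"
  using d
proof
  assume "cdim P \<le> d"
  then have "P \<subseteq> vec.span (p ` {..<d})"
    using orthonormal_span_superset[OF principal_vectors_orthonormal(1)[OF pv]]
      principal_vectorsD(1)[OF pv] by blast
  then have "cinner x x = 0"
    using x by (intro cinner_span_eq_0[of x]) auto
  then show ?thesis
    by (simp add: cinner_self_eq_0_iff)
next
  assume "cdim Q \<le> d"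
  then have "Q \<subseteq> vec.span (q ` {..<d})"
    using orthonormal_span_superset[OF principal_vectors_orthonormal(2)[OF pv]]
      principal_vectorsD(2)[OF pv] by blast
  moreover have "cinner x (q k) = 0" if "k < d" for k
    using principal_vector_cinner_left[OF pv P that x(1)] x(2) that by simp
  ultimately show ?thesis
    using y by (intro cinner_span_eq_0[of y]) auto
qed

definition principal_residual ::
  "(nat \<Rightarrow> complex ^ 'n) \<Rightarrow> (nat \<Rightarrow> complex ^ 'n) \<Rightarrow> nat \<Rightarrow> complex ^ 'n" where
  "principal_residual p q k = p k - cinner (p k) (q k) *s q k"

lemma principal_residual_orthogonal:
  assumes pv: "principal_vectors P Q d p q" and P: "csubspace P" and Q: "csubspace Q"
    and k: "k < d" and y: "y \<in> Q"
  shows "cinner (principal_residual p q k) y = 0"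
proof -
  have onq: "orthonormal k q"
    using orthonormal_mono[OF principal_vectors_orthonormal(2)[OF pv]] k by simp
  define y' where "y' = y - (\<Sum>j<k. cinner y (q j) *s q j)"
  have "y' \<in> Q"
    unfolding y'_def using principal_vectorsD(2)[OF pv] k y
    by (intro vec.subspace_diff[OF Q] vec.subspace_sum[OF Q] vec.subspace_scale[OF Q]) auto
  moreover have "\<forall>j<k. cinner y' (q j) = 0"
    unfolding y'_def using cinner_sub_orthonormal_expansion[OF onq] by blast
  ultimately have "cinner (principal_residual p q k) y' = 0"
    using principal_vector_cinner_right[OF pv Q k]
    by (simp add: principal_residual_def cinner_diff_left cinner_scale_left)
  moreover have "cinner (principal_residual p q k) (q j) = 0" if "j < k" for j
    using principal_vectors_cinner_cross[OF pv P Q k, of j] that k principal_vectorsD(6)[OF pv k]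
    by (simp add: principal_residual_def cinner_diff_left cinner_scale_left)
  moreover have "cinner (principal_residual p q k) (y' + (\<Sum>j<k. cinner y (q j) *s q j)) =
      cinner (principal_residual p q k) y' +
      (\<Sum>j<k. cnj (cinner y (q j)) * cinner (principal_residual p q k) (q j))"
    by (simp add: cinner_add_right cinner_sum_right cinner_scale_right)
  ultimately show ?thesis
    by (simp add: y'_def)
qed

lemma principal_residual_pairwise_orthogonal:
  assumes pv: "principal_vectors P Q d p q" and P: "csubspace P" and Q: "csubspace Q"
    and "k < d" "l < d" "k \<noteq> l"
  shows "cinner (principal_residual p q k) (principal_residual p q l) = 0"
proof -
  have "cinner (principal_residual p q k) (principal_residual p q l) =
        cinner (principal_residual p q k) (p l)"
    using principal_residual_orthogonal[OF pv P Q \<open>k < d\<close> principal_vectorsD(2)[OF pv \<open>l < d\<close>]]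
    by (simp add: principal_residual_def[of p q l] cinner_diff_right cinner_scale_right)
  also have "\<dots> = cinner (p k) (p l) - cinner (p k) (q k) * cinner (q k) (p l)"
    by (simp add: principal_residual_def cinner_diff_left cinner_scale_left)
  also have "\<dots> = 0"
    using cinner_eq_0_commute[OF principal_vectors_cinner_cross[OF pv P Q \<open>l < d\<close> \<open>k < d\<close> not_sym[OF \<open>k \<noteq> l\<close>]]]
      principal_vectors_orthonormal(1)[OF pv] assms(4-6)
    by (simp add: orthonormal_def)
  finally show ?thesis .
qed

lemma cinner_principal_residual_self:
  assumes pv: "principal_vectors P Q d p q" and P: "csubspace P" and Q: "csubspace Q"
    and k: "k < d"
  shows "cinner (principal_residual p q k) (principal_residual p q k) =
         complex_of_real (1 - (cmod (cinner (p k) (q k)))\<^sup>2)"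
proof -
  have "cinner (principal_residual p q k) (principal_residual p q k) =
        cinner (principal_residual p q k) (p k)"
    using principal_residual_orthogonal[OF pv P Q k principal_vectorsD(2)[OF pv k]]
    by (simp add: principal_residual_def[of p q k] cinner_diff_right cinner_scale_right)
  also have "\<dots> = cinner (p k) (p k) - cinner (p k) (q k) * cnj (cinner (p k) (q k))"
    by (simp add: principal_residual_def cinner_diff_left cinner_scale_left
        cinner_commute[of "q k" "p k"])
  finally show ?thesis
    using principal_vectorsD(3)[OF pv k] by (simp add: complex_mult_cnj cmod_power2)
qed

lemma norm_principal_residual_sum:
  assumes pv: "principal_vectors P Q d p q" and P: "csubspace P" and Q: "csubspace Q"
  shows "(norm (\<Sum>k<d. \<alpha> k *s principal_residual p q k))\<^sup>2 =
         (\<Sum>k<d. (cmod (\<alpha> k))\<^sup>2 * (1 - (cmod (cinner (p k) (q k)))\<^sup>2))"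
proof -
  have "cinner (\<Sum>k<d. \<alpha> k *s principal_residual p q k) (\<Sum>k<d. \<alpha> k *s principal_residual p q k) =
        complex_of_real (\<Sum>k<d. (cmod (\<alpha> k))\<^sup>2 * (1 - (cmod (cinner (p k) (q k)))\<^sup>2))"
    using principal_residual_pairwise_orthogonal[OF pv P Q] cinner_principal_residual_self[OF pv P Q]
    by (subst cinner_orthogonal_sum) (auto simp: of_real_cmod_power2 intro!: sum.cong)
  then show ?thesis
    by (simp only: cinner_self of_real_eq_iff)
qed

section \<open>A logarithmic inequality for substochastic weights\<close>

lemma substochastic_average_pos:
  fixes x B :: "nat \<Rightarrow> real"
  assumes x: "\<forall>k<d. 0 < x k" and B: "\<forall>k<d. 0 \<le> B k" and s: "(\<Sum>k<d. B k) \<le> 1"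
  shows "(\<Sum>k<d. B k * x k) + (1 - (\<Sum>k<d. B k)) > 0"
proof (cases "(\<Sum>k<d. B k) = 1")
  case True
  have "\<exists>k0<d. B k0 \<noteq> 0"
  proof (rule ccontr)
    assume "\<not> (\<exists>k0<d. B k0 \<noteq> 0)"
    then have "(\<Sum>k<d. B k) = 0" by simp
    with True show False by simp
  qed
  then obtain k0 where "k0 < d" "B k0 \<noteq> 0" by blast
  then have "(\<Sum>k<d. B k * x k) > 0"
    using x B by (intro sum_pos2[of _ k0]) (auto simp: less_le)
  then show ?thesis
    using True by simp
next
  case False
  have "(\<Sum>k<d. B k * x k) \<ge> 0"
    using x B by (intro sum_nonneg mult_nonneg_nonneg) (auto simp: less_imp_le)
  then show ?thesis
    using False s by linarith
qed

lemma substochastic_average_ln: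
  fixes x B :: "nat \<Rightarrow> real"
  assumes x: "\<forall>k<d. 0 < x k" and B: "\<forall>k<d. 0 \<le> B k" and s: "(\<Sum>k<d. B k) \<le> 1"
  shows "(\<Sum>k<d. B k * ln (x k)) \<le> ln ((\<Sum>k<d. B k * x k) + (1 - (\<Sum>k<d. B k)))"
proof -
  define w where "w k = (if k < d then B k else 1 - (\<Sum>k<d. B k))" for k
  define y where "y k = (if k < d then x k else 1)" for k
  have "(\<Sum>k<Suc d. w k * ln (y k)) \<le> ln (\<Sum>k<Suc d. w k *\<^sub>R y k)"
    using x B s by (intro concave_on_sum[OF _ _ ln_concave]) (auto simp: w_def y_def less_Suc_eq)
  then show ?thesis
    by (simp add: w_def y_def)
qed

text \<open>After taking logarithms, the column bounds give ln (x k) \<le> (\<Sum>j<m. B j k) * ln (x k)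
  because ln (x k) \<le> 0, and each row is handled by Jensen's inequality above.\<close>
lemma prod_le_prod_substochastic_averages:
  fixes x :: "nat \<Rightarrow> real" and B :: "nat \<Rightarrow> nat \<Rightarrow> real"
  assumes x: "\<forall>k<d. 0 \<le> x k \<and> x k \<le> 1" and B: "\<forall>j<m. \<forall>k<d. 0 \<le> B j k"
    and rows: "\<forall>j<m. (\<Sum>k<d. B j k) \<le> 1" and cols: "\<forall>k<d. (\<Sum>j<m. B j k) \<le> 1"
  shows "(\<Prod>k<d. x k) \<le> (\<Prod>j<m. (\<Sum>k<d. B j k * x k) + (1 - (\<Sum>k<d. B j k)))"
proof (cases "\<exists>k<d. x k = 0")
  case True
  then have "(\<Prod>k<d. x k) = 0" by auto
  moreover have "(\<Prod>j<m. (\<Sum>k<d. B j k * x k) + (1 - (\<Sum>k<d. B j k))) \<ge> 0"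
    using x B rows by (intro prod_nonneg add_nonneg_nonneg sum_nonneg mult_nonneg_nonneg) auto
  ultimately show ?thesis by linarith
next
  case False
  then have xp: "\<forall>k<d. 0 < x k" using x by (auto simp: less_le)
  define M where "M j = (\<Sum>k<d. B j k * x k) + (1 - (\<Sum>k<d. B j k))" for j
  have M: "M j > 0" if "j < m" for j
    unfolding M_def using substochastic_average_pos[OF xp] B rows that by auto
  have "ln (\<Prod>k<d. x k) = (\<Sum>k<d. ln (x k))"
    using xp by (subst ln_prod) auto
  also have "\<dots> \<le> (\<Sum>k<d. (\<Sum>j<m. B j k) * ln (x k))"
  proof (rule sum_mono)
    fix k assume k: "k \<in> {..<d}"
    have "ln (x k) \<le> 0" "(\<Sum>j<m. B j k) \<le> 1" "(\<Sum>j<m. B j k) \<ge> 0"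
      using x xp cols B k by (auto intro: sum_nonneg)
    then show "ln (x k) \<le> (\<Sum>j<m. B j k) * ln (x k)"
      by (smt (verit) mult_le_cancel_right1)
  qed
  also have "\<dots> = (\<Sum>j<m. \<Sum>k<d. B j k * ln (x k))"
    by (simp add: sum_distrib_right sum.swap[of _ "{..<m}"])
  also have "\<dots> \<le> (\<Sum>j<m. ln (M j))"
    unfolding M_def using substochastic_average_ln[OF xp] B rows by (intro sum_mono) auto
  also have "\<dots> = ln (\<Prod>j<m. M j)"
    using M by (intro ln_prod[symmetric]) (auto simp: less_le)
  finally have "ln (\<Prod>k<d. x k) \<le> ln (\<Prod>j<m. M j)" .
  moreover have "(\<Prod>k<d. x k) > 0" "(\<Prod>j<m. M j) > 0"
    using xp M by (auto intro: prod_pos)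
  ultimately show ?thesis
    unfolding M_def by simp
qed

section \<open>Distances to the second subspace\<close>

lemma principal_orthogonal_component:
  assumes pv: "principal_vectors P Q d p q" and P: "csubspace P" and Q: "csubspace Q"
    and d: "cdim P \<le> d \<or> cdim Q \<le> d" and a: "a \<in> P" "cinner a a = 1"
  shows "\<exists>R. a - R \<in> Q \<and> (\<forall>y\<in>Q. cinner R y = 0) \<and>
    (norm R)\<^sup>2 = (\<Sum>k<d. (cmod (cinner a (p k)))\<^sup>2 * (1 - (cmod (cinner (p k) (q k)))\<^sup>2))
                 + (1 - (\<Sum>k<d. (cmod (cinner a (p k)))\<^sup>2))"
proof -
  define \<alpha> where "\<alpha> k = cinner a (p k)" for k
  define r where "r = principal_residual p q"
  define e where "e = a - (\<Sum>k<d. \<alpha> k *s p k)"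
  define R where "R = (\<Sum>k<d. \<alpha> k *s r k) + e"
  note onp = principal_vectors_orthonormal(1)[OF pv]
  have e_p: "cinner e (p k) = 0" if "k < d" for k
    unfolding e_def \<alpha>_def by (rule cinner_sub_orthonormal_expansion[OF onp that])
  have "e \<in> P"
    unfolding e_def using a(1) principal_vectorsD(1)[OF pv]
    by (intro vec.subspace_diff[OF P] vec.subspace_sum[OF P] vec.subspace_scale[OF P]) auto
  then have e_Q: "cinner e y = 0" if "y \<in> Q" for y
    using principal_vectors_complement_orthogonal[OF pv P Q d _ _ that] e_p by blast
  have r_Q: "cinner (r k) y = 0" if "k < d" "y \<in> Q" for k y
    unfolding r_def using principal_residual_orthogonal[OF pv P Q that] .
  have "a - R = (\<Sum>k<d. (\<alpha> k * cinner (p k) (q k)) *s q k)"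
    by (simp add: R_def e_def r_def principal_residual_def vector_ssub_ldistrib
        vector_smult_assoc sum_subtractf[symmetric])
  also have "\<dots> \<in> Q"
    using principal_vectorsD(2)[OF pv] by (intro vec.subspace_sum[OF Q] vec.subspace_scale[OF Q]) auto
  finally have "a - R \<in> Q" .
  moreover have "\<forall>y\<in>Q. cinner R y = 0"
    using r_Q e_Q by (simp add: R_def cinner_add_left cinner_sum_left cinner_scale_left)
  moreover have "(norm R)\<^sup>2 = (\<Sum>k<d. (cmod (\<alpha> k))\<^sup>2 * (1 - (cmod (cinner (p k) (q k)))\<^sup>2))
                 + (1 - (\<Sum>k<d. (cmod (\<alpha> k))\<^sup>2))"
  proof -
    have "cinner (r k) e = 0" if "k < d" for k
      using cinner_eq_0_commute[OF e_p[OF that]] cinner_eq_0_commute[OF e_Q[OF principal_vectorsD(2)[OF pv that]]]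
      by (simp add: r_def principal_residual_def cinner_diff_left cinner_scale_left)
    then have "cinner (\<Sum>k<d. \<alpha> k *s r k) e = 0"
      by (simp add: cinner_sum_left cinner_scale_left)
    then have "(norm R)\<^sup>2 = (norm (\<Sum>k<d. \<alpha> k *s r k))\<^sup>2 + (norm e)\<^sup>2"
      unfolding R_def by (intro norm_add_Pythagorean orthogonal_if_cinner_eq_0)
    then show ?thesis
      using norm_principal_residual_sum[OF pv P Q, of \<alpha>] norm_orthonormal_remainder[OF onp, of a] a(2)
      by (simp add: r_def e_def \<alpha>_def cinner_self_eq_1_iff)
  qed
  ultimately show ?thesis
    unfolding \<alpha>_def by blast
qed

lemma sin_prod_aux_eq:
  assumes X: "csubspace X" and Y: "csubspace Y" and "cdim X \<le> cdim Y"
  shows "\<exists>u w. principal_vectors X Y (cdim X) u w \<and>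
     sin_prod_aux X Y = (\<Prod>k<cdim X. sqrt (1 - (cmod (cinner (u k) (w k)))\<^sup>2))"
proof -
  define uw where "uw = (SOME uw. principal_vectors X Y (cdim X) (fst uw) (snd uw))"
  have "\<exists>uw. principal_vectors X Y (cdim X) (fst uw) (snd uw)"
    using principal_vectors_exist[OF X Y order_refl assms(3)] by simp
  then have pv: "principal_vectors X Y (cdim X) (fst uw) (snd uw)"
    unfolding uw_def by (rule someI_ex)
  have "sin_prod_aux X Y = (\<Prod>k<cdim X. sqrt (1 - (cmod (cinner (fst uw k) (snd uw k)))\<^sup>2))"
    unfolding sin_prod_aux_def Let_def uw_def[symmetric]
    using principal_vectors_cos_le_1[OF pv]
    by (intro prod.cong refl sin_arccos) (auto intro: order_trans[OF _ norm_ge_zero])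
  then show ?thesis
    using pv by blast
qed

lemma norm_orthogonal_component_le_sin_vec:
  assumes Q: "csubspace Q" and x: "cinner x x = 1" and y: "y \<noteq> 0" "y \<in> Q"
    and R: "x - R \<in> Q" "\<forall>z\<in>Q. cinner R z = 0"
  shows "norm R \<le> sin_vec x y"
proof -
  have "x \<noteq> 0" using x by auto
  then have dims: "cdim (vec.span {x}) = 1" "cdim (vec.span {y}) = 1"
    using y by (simp_all add: vec.dim_insert)
  obtain u w where pv: "principal_vectors (vec.span {x}) (vec.span {y}) 1 u w"
    and sin: "sin_vec x y = sqrt (1 - (cmod (cinner (u 0) (w 0)))\<^sup>2)"
    using sin_prod_aux_eq[of "vec.span {x}" "vec.span {y}"] dims
    by (auto simp: sin_vec_def sin_subspaces_def vec.subspace_span)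
  note uw = principal_vectorsD[OF pv zero_less_one]
  obtain s where s: "u 0 = s *s x"
    using uw(1) vec.span_singleton by auto
  have "cmod s = 1"
    using uw(3) x by (simp add: s norm_vector_smult cinner_self_eq_1_iff)
  have "w 0 \<in> Q"
    using uw(2) vec.span_minimal[of "{y}" Q] Q y by auto
  have "cinner R (x - R) = 0"
    using R by blast
  then have "orthogonal (x - R) R"
    by (rule orthogonal_if_cinner_eq_0[OF cinner_eq_0_commute])
  then have pythagoras: "(norm (x - R))\<^sup>2 + (norm R)\<^sup>2 = 1"
    using norm_add_Pythagorean[of "x - R" R] x by (simp add: cinner_self_eq_1_iff)
  have "cmod (cinner (u 0) (w 0)) = cmod (cinner (x - R) (w 0))"
    using R(2) \<open>w 0 \<in> Q\<close> \<open>cmod s = 1\<close>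
    by (simp add: s cinner_scale_left cinner_diff_left norm_mult)
  also have "\<dots> \<le> norm (x - R)"
    using cinner_Cauchy_Schwarz[of "x - R" "w 0"] uw(4) by (simp add: cinner_self_eq_1_iff)
  finally have "(cmod (cinner (u 0) (w 0)))\<^sup>2 \<le> (norm (x - R))\<^sup>2"
    by (simp add: power_mono)
  then have "(norm R)\<^sup>2 \<le> 1 - (cmod (cinner (u 0) (w 0)))\<^sup>2"
    using pythagoras by linarith
  then show ?thesis
    using sin real_sqrt_le_mono by fastforce
qed

lemma prod_principal_sines_le_prod_sin_vec:
  assumes pv: "principal_vectors P Q d p q" and P: "csubspace P" and Q: "csubspace Q"
    and d: "cdim P \<le> d \<or> cdim Q \<le> d"
    and a: "orthonormal d a" "\<forall>j<d. a j \<in> P" and b: "\<forall>j<d. b j \<in> Q \<and> b j \<noteq> 0"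
  shows "(\<Prod>k<d. sqrt (1 - (cmod (cinner (p k) (q k)))\<^sup>2)) \<le> (\<Prod>j<d. sin_vec (a j) (b j))"
proof -
  define x where "x k = 1 - (cmod (cinner (p k) (q k)))\<^sup>2" for k
  define B where "B j k = (cmod (cinner (a j) (p k)))\<^sup>2" for j k
  have a1: "cinner (a j) (a j) = 1" if "j < d" for j
    using orthonormal_norm[OF a(1) that] by (simp add: cinner_self_eq_1_iff)
  have "\<forall>j\<in>{..<d}. \<exists>R. a j - R \<in> Q \<and> (\<forall>y\<in>Q. cinner R y = 0) \<and>
          (norm R)\<^sup>2 = (\<Sum>k<d. B j k * x k) + (1 - (\<Sum>k<d. B j k))"
    unfolding B_def x_def using principal_orthogonal_component[OF pv P Q d] a(2) a1 by blast
  then obtain R where R: "\<forall>j\<in>{..<d}. a j - R j \<in> Q \<and> (\<forall>y\<in>Q. cinner (R j) y = 0) \<and>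
          (norm (R j))\<^sup>2 = (\<Sum>k<d. B j k * x k) + (1 - (\<Sum>k<d. B j k))"
    by (rule bchoice[THEN exE])
  have x: "\<forall>k<d. 0 \<le> x k \<and> x k \<le> 1"
    using principal_vectors_cos_le_1[OF pv] by (auto simp: x_def intro!: power_le_one)
  then have "(\<Prod>k<d. x k) \<le> (\<Prod>j<d. (\<Sum>k<d. B j k * x k) + (1 - (\<Sum>k<d. B j k)))"
    using orthonormal_cross_substochastic[OF a(1) principal_vectors_orthonormal(1)[OF pv]]
    by (intro prod_le_prod_substochastic_averages) (auto simp: B_def)
  also have "\<dots> = (\<Prod>j<d. norm (R j))\<^sup>2"
    using R by (simp add: prod_power_distrib)
  finally have "(\<Prod>k<d. sqrt (x k))\<^sup>2 \<le> (\<Prod>j<d. norm (R j))\<^sup>2"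
    using x by (simp add: prod_power_distrib)
  then have "(\<Prod>k<d. sqrt (x k)) \<le> (\<Prod>j<d. norm (R j))"
    by (rule power2_le_imp_le) (simp add: prod_nonneg)
  also have "\<dots> \<le> (\<Prod>j<d. sin_vec (a j) (b j))"
    using norm_orthogonal_component_le_sin_vec[OF Q] a1 b R by (intro prod_mono) auto
  finally show ?thesis
    by (simp add: x_def)
qed

theorem lemma2:
  fixes A B :: "(complex ^ 'n) set"
    and a b :: nat
    and av bv :: "nat \<Rightarrow> complex ^ 'n"
  assumes "csubspace A" and "csubspace B"
    and "cdim A = a" and "cdim B = b"
    and "\<forall>i<a. \<forall>j<a. cinner (av i) (av j) = (if i = j then 1 else 0)"
    and "vec.span (av ` {..<a}) = A"
    and "inj_on bv {..<b}" and "vec.independent (bv ` {..<b})"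
    and "vec.span (bv ` {..<b}) = B"
  shows "sin_subspaces A B \<le> (\<Prod>j<min a b. sin_vec (av j) (bv j))"
proof -
  have av: "orthonormal (min a b) av" "\<forall>j<min a b. av j \<in> A"
    using assms(5,6) by (auto simp: orthonormal_def intro: vec.span_base)
  have "bv j \<in> bv ` {..<b}" if "j < min a b" for j
    using that by simp
  then have bv: "\<forall>j<min a b. bv j \<in> B \<and> bv j \<noteq> 0"
    using assms(8,9) vec.dependent_zero vec.span_base by metis
  note bound = prod_principal_sines_le_prod_sin_vec[OF _ assms(1,2) _ av bv]
  show ?thesis
  proof (cases "a \<le> b")
    case True
    then obtain p q where "principal_vectors A B a p q"
      and "sin_subspaces A B = (\<Prod>k<a. sqrt (1 - (cmod (cinner (p k) (q k)))\<^sup>2))"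
      using sin_prod_aux_eq[OF assms(1,2)] assms(3,4) by (auto simp: sin_subspaces_def)
    then show ?thesis
      using bound[of p q] True assms(3) by simp
  next
    case False
    then obtain q p where pv: "principal_vectors B A b q p"
      and "sin_subspaces A B = (\<Prod>k<b. sqrt (1 - (cmod (cinner (q k) (p k)))\<^sup>2))"
      using sin_prod_aux_eq[OF assms(2,1)] assms(3,4) by (auto simp: sin_subspaces_def)
    then show ?thesis
      using bound[of p q] principal_vectors_swap[OF pv] False assms(4)
      by (simp add: cmod_cinner_commute[of "q _"])
  qed
qed

end
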